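(* Let $\pi$ be a permutation-invariant probability density on $\mathbb{X}^n$ and $q$ a probability density on $\mathbb{X}$. For every $x\in\mathbb{X}^n$, $y\in\mathbb{X}$ and $i\in\{1,\dots,n\}$, $$\alpha_i^{\mathrm{IMwG}}(y,x)=\min\Big\{1,\frac{w_i(y,x)}{w_0(y,x)}\Big\}\le \alpha_i^{\mathrm{SOMA}}(y,x).$$
   Context: Permutation invariance: $\pi(x_{\sigma(1)},\dots,x_{\sigma(n)})=\pi(x)$ for all permutations $\sigma$. $[x_{-i},y]$ is $x$ with its $i$-th component replaced by $y$. Weights: $w_i(y,x)=\pi([x_{-i},y])/\big(q(y)\prod_{j\ne i}q(x_j)\big)$ for $1\le i\le n$, $w_0(y,x)=\pi(x)/\prod_{j=1}^n q(x_j)$, $W(y,x)=\sum_{i=1}^n w_i(y,x)$ (assumed well-defined and positive). The independent-Metropolis-within-Gibbs acceptance probability for replacing $x_i$ by $y$ is $\alpha_i^{\mathrm{IMwG}}(y,x)=\min\{1,\pi([x_{-i},y])q(x_i)/(\pi(x)q(y))\}$. The SOMA acceptance probability is $\alpha_i^{\mathrm{SOMA}}(y,x)=\min\{1,W(y,x)/(W(y,x)+w_0(y,x)-w_i(y,x))\}$. *)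

theory Defs
  imports "HOL-Analysis.Analysis"
begin

text \<open>Points of X^n are functions x :: nat => 'a, meaningful on the index set {1..n}.
  [x_{-i}, y] is the update x(i := y).\<close>

definition perm_invariant :: "nat \<Rightarrow> ((nat \<Rightarrow> 'a) \<Rightarrow> real) \<Rightarrow> 'a set \<Rightarrow> bool" where
  "perm_invariant n \<pi> X \<longleftrightarrow>
     (\<forall>\<sigma> x. \<sigma> permutes {1..n} \<longrightarrow> x \<in> PiE {1..n} (\<lambda>_. X) \<longrightarrow> \<pi> (x \<circ> \<sigma>) = \<pi> x)"

definition w_i :: "nat \<Rightarrow> ((nat \<Rightarrow> 'a) \<Rightarrow> real) \<Rightarrow> ('a \<Rightarrow> real) \<Rightarrow> nat \<Rightarrow> 'a \<Rightarrow> (nat \<Rightarrow> 'a) \<Rightarrow> real" where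
  "w_i n \<pi> q i y x = \<pi> (x(i := y)) / (q y * (\<Prod>j\<in>{1..n} - {i}. q (x j)))"

definition w_0 :: "nat \<Rightarrow> ((nat \<Rightarrow> 'a) \<Rightarrow> real) \<Rightarrow> ('a \<Rightarrow> real) \<Rightarrow> 'a \<Rightarrow> (nat \<Rightarrow> 'a) \<Rightarrow> real" where
  "w_0 n \<pi> q y x = \<pi> x / (\<Prod>j\<in>{1..n}. q (x j))"

definition W_sum :: "nat \<Rightarrow> ((nat \<Rightarrow> 'a) \<Rightarrow> real) \<Rightarrow> ('a \<Rightarrow> real) \<Rightarrow> 'a \<Rightarrow> (nat \<Rightarrow> 'a) \<Rightarrow> real" where
  "W_sum n \<pi> q y x = (\<Sum>i\<in>{1..n}. w_i n \<pi> q i y x)"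

definition alpha_IMwG :: "((nat \<Rightarrow> 'a) \<Rightarrow> real) \<Rightarrow> ('a \<Rightarrow> real) \<Rightarrow> nat \<Rightarrow> 'a \<Rightarrow> (nat \<Rightarrow> 'a) \<Rightarrow> real" where
  "alpha_IMwG \<pi> q i y x = min 1 ((\<pi> (x(i := y)) * q (x i)) / (\<pi> x * q y))"

definition alpha_SOMA :: "nat \<Rightarrow> ((nat \<Rightarrow> 'a) \<Rightarrow> real) \<Rightarrow> ('a \<Rightarrow> real) \<Rightarrow> nat \<Rightarrow> 'a \<Rightarrow> (nat \<Rightarrow> 'a) \<Rightarrow> real" where
  "alpha_SOMA n \<pi> q i y x =
     min 1 (W_sum n \<pi> q y x / (W_sum n \<pi> q y x + w_0 n \<pi> q y x - w_i n \<pi> q i y x))"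

end

theory Submission
  imports Defs
begin

text \<open>The factors \<open>q(x\<^sub>j)\<close>, \<open>j \<noteq> i\<close>, cancel in \<open>w\<^sub>i / w\<^sub>0\<close>, which is therefore the IMwG
  acceptance ratio. The SOMA ratio is \<open>(w\<^sub>i + c) / (w\<^sub>0 + c)\<close> with \<open>c = W - w\<^sub>i \<ge> 0\<close>, and adding
  the same nonnegative amount to numerator and denominator of a ratio below 1 can only
  increase it; capping at 1 gives the inequality.\<close>

lemma divide_le_add_divide_add:
  fixes a b c :: real
  assumes "0 \<le> a" "a \<le> b" "0 \<le> c" "0 < b + c"
  shows "a / b \<le> (a + c) / (b + c)"
proof (cases "b = 0")
  case False
  with assms have "0 < b" by simp
  moreover have "a * c \<le> b * c" using assms by (simp add: mult_right_mono)
  ultimately show ?thesis using assms by (simp add: divide_simps algebra_simps)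
qed (use assms in simp)

lemma min_1_divide_le_min_1_add_divide_add:
  fixes a b c :: real
  assumes "0 \<le> a" "0 \<le> b" "0 \<le> c" "0 < a + c"
  shows "min 1 (a / b) \<le> min 1 ((a + c) / (b + c))"
proof (cases "a \<le> b")
  case True
  then show ?thesis using assms divide_le_add_divide_add[of a b c] by simp
next
  case False
  show ?thesis
  proof (cases "b + c = 0")
    case True
    with assms have "b = 0" by simp
    then show ?thesis using assms by simp
  next
    case False
    with \<open>\<not> a \<le> b\<close> assms have "1 \<le> (a + c) / (b + c)" by simp
    then show ?thesis by simp
  qed
qed

lemma w_i_nonneg:
  assumes "\<And>z. \<pi> z \<ge> 0" "q y > 0" "\<And>j. j \<in> {1..n} \<Longrightarrow> q (x j) > 0"
  shows "w_i n \<pi> q i y x \<ge> 0"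
  unfolding w_i_def using assms by (intro divide_nonneg_pos mult_pos_pos prod_pos) auto

lemma w_0_nonneg:
  assumes "\<And>z. \<pi> z \<ge> 0" "\<And>j. j \<in> {1..n} \<Longrightarrow> q (x j) > 0"
  shows "w_0 n \<pi> q y x \<ge> 0"
  unfolding w_0_def using assms by (intro divide_nonneg_pos prod_pos) auto

lemma w_i_le_W_sum:
  assumes "i \<in> {1..n}" "\<And>z. \<pi> z \<ge> 0" "q y > 0" "\<And>j. j \<in> {1..n} \<Longrightarrow> q (x j) > 0"
  shows "w_i n \<pi> q i y x \<le> W_sum n \<pi> q y x"
  unfolding W_sum_def using assms by (intro member_le_sum w_i_nonneg) auto

lemma alpha_IMwG_eq_min_1_weight_ratio:
  assumes "i \<in> {1..n}" "q y > 0" "\<And>j. j \<in> {1..n} \<Longrightarrow> q (x j) > 0"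
  shows "alpha_IMwG \<pi> q i y x = min 1 (w_i n \<pi> q i y x / w_0 n \<pi> q y x)"
proof -
  define P where "P = (\<Prod>j\<in>{1..n} - {i}. q (x j))"
  have "P > 0" unfolding P_def using assms by (intro prod_pos) auto
  moreover have "q (x i) > 0" using assms by simp
  ultimately show ?thesis
    unfolding alpha_IMwG_def w_i_def w_0_def
      prod.remove[OF finite_atLeastAtMost assms(1)] P_def[symmetric]
    using assms(2) by (simp add: field_simps)
qed

lemma alpha_SOMA_eq_min_1_shifted_weight_ratio:
  "alpha_SOMA n \<pi> q i y x =
     min 1 ((w_i n \<pi> q i y x + (W_sum n \<pi> q y x - w_i n \<pi> q i y x))
          / (w_0 n \<pi> q y x + (W_sum n \<pi> q y x - w_i n \<pi> q i y x)))"
  unfolding alpha_SOMA_def by (simp add: algebra_simps)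

theorem theorem2:
  fixes M :: "'a measure" and n :: nat
    and \<pi> :: "(nat \<Rightarrow> 'a) \<Rightarrow> real" and q :: "'a \<Rightarrow> real"
    and x :: "nat \<Rightarrow> 'a" and y :: 'a and i :: nat
  assumes pi_meas: "\<pi> \<in> borel_measurable (PiM {1..n} (\<lambda>_. M))"
    and pi_nonneg: "\<And>z. \<pi> z \<ge> 0"
    and pi_int: "(\<integral>\<^sup>+ z. ennreal (\<pi> z) \<partial>(PiM {1..n} (\<lambda>_. M))) = 1"
    and pi_sym: "perm_invariant n \<pi> (space M)"
    and q_meas: "q \<in> borel_measurable M"
    and q_nonneg: "\<And>z. q z \<ge> 0"
    and q_int: "(\<integral>\<^sup>+ z. ennreal (q z) \<partial>M) = 1"
    and x_in: "x \<in> space (PiM {1..n} (\<lambda>_. M))"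
    and y_in: "y \<in> space M"
    and i_in: "i \<in> {1..n}"
    and q_y_pos: "q y > 0"
    and q_x_pos: "\<And>j. j \<in> {1..n} \<Longrightarrow> q (x j) > 0"
    and W_pos: "W_sum n \<pi> q y x > 0"
  shows "alpha_IMwG \<pi> q i y x = min 1 (w_i n \<pi> q i y x / w_0 n \<pi> q y x)
         \<and> alpha_IMwG \<pi> q i y x \<le> alpha_SOMA n \<pi> q i y x"
proof -
  have ratio: "alpha_IMwG \<pi> q i y x = min 1 (w_i n \<pi> q i y x / w_0 n \<pi> q y x)"
    using i_in q_y_pos q_x_pos by (rule alpha_IMwG_eq_min_1_weight_ratio)
  have "min 1 (w_i n \<pi> q i y x / w_0 n \<pi> q y x) \<le> alpha_SOMA n \<pi> q i y x"
    unfolding alpha_SOMA_eq_min_1_shifted_weight_ratio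
  proof (rule min_1_divide_le_min_1_add_divide_add)
    show "0 \<le> w_i n \<pi> q i y x" using pi_nonneg q_y_pos q_x_pos by (rule w_i_nonneg)
    show "0 \<le> w_0 n \<pi> q y x" using pi_nonneg q_x_pos by (rule w_0_nonneg)
    have "w_i n \<pi> q i y x \<le> W_sum n \<pi> q y x"
      using i_in pi_nonneg q_y_pos q_x_pos by (rule w_i_le_W_sum)
    then show "0 \<le> W_sum n \<pi> q y x - w_i n \<pi> q i y x" by simp
    show "0 < w_i n \<pi> q i y x + (W_sum n \<pi> q y x - w_i n \<pi> q i y x)"
      using W_pos by simp
  qed
  with ratio show ?thesis by simp
qed

end
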